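(* For all odd integers $n\ge1$ and real numbers $a\ge1$, $x\in(-1,1)$, we have $\Lambda_{n,a}(x)\ge 2(1+x)$. Equality holds if and only if $n=1$, $a=1$ (any $x$), or $n=3$, $a=1$, $x=0$.
   Context: $U_j$ denotes the Chebyshev polynomial of the second kind of degree $j$, i.e. $U_j(\cos t)=\sin((j+1)t)/\sin t$. For a real number $a$ and integers $0\le m$, $\binom{m+a}{m}=\frac{(a+1)(a+2)\cdots(a+m)}{m!}$ (equal to $1$ when $m=0$). For an integer $n\ge0$, $\Lambda_{n,a}(x)=\sum_{j=0}^n\binom{n+a-j}{n-j}U_j(x)$. *)

theory Defs
  imports "HOL-Analysis.Analysis"
begin

text \<open>Chebyshev polynomials of the second kind, via the standard three-term recurrence
  (equivalently U_j(cos t) = sin((j+1)t)/sin t).\<close>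
fun chebU :: "nat \<Rightarrow> real \<Rightarrow> real" where
  "chebU 0 x = 1"
| "chebU (Suc 0) x = 2 * x"
| "chebU (Suc (Suc j)) x = 2 * x * chebU (Suc j) x - chebU j x"

text \<open>binom(m+a, m) = (a+1)(a+2)...(a+m)/m! for real a.\<close>
definition binomR :: "real \<Rightarrow> nat \<Rightarrow> real" where
  "binomR a m = (\<Prod>i=1..m. (a + real i)) / fact m"

definition Lambda :: "nat \<Rightarrow> real \<Rightarrow> real \<Rightarrow> real" where
  "Lambda n a x = (\<Sum>j=0..n. binomR a (n - j) * chebU j x)"

end

theory Submission
  imports Defs
begin

text \<open>
  By Vandermonde's convolution, \<open>\<Lambda>\<^sub>n\<^sub>,\<^sub>a = \<Sum>\<^sub>k binomR (a - 2) k \<cdot> C\<^sub>n\<^sub>-\<^sub>k\<close>, where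
  \<open>C\<^sub>m = \<Sum>\<^sub>j\<^sub>\<le>\<^sub>m (m + 1 - j) U\<^sub>j = \<Lambda>\<^sub>m\<^sub>,\<^sub>1\<close>; for \<open>a \<ge> 1\<close> all coefficients are nonnegative,
  the first two being \<open>1\<close> and \<open>a - 1\<close>, and for \<open>a = 1\<close> all others vanish.
  The product formula \<open>U\<^sub>j\<^sub>+\<^sub>k\<^sub>+\<^sub>2 = U\<^sub>j\<^sub>+\<^sub>1 U\<^sub>k\<^sub>+\<^sub>1 - U\<^sub>j U\<^sub>k\<close> turns the \<open>C\<^sub>m\<close> into sums of
  squares: \<open>C\<^sub>2\<^sub>m\<^sub>+\<^sub>1 = 2 (1 + x) \<Sum>\<^sub>i\<^sub>\<le>\<^sub>m U\<^sub>i\<^sup>2\<close> and \<open>C\<^sub>2\<^sub>m = 1 + \<Sum>\<^sub>i\<^sub><\<^sub>m (U\<^sub>i\<^sub>+\<^sub>1 + U\<^sub>i)\<^sup>2\<close>.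
  Hence \<open>\<Lambda>\<^sub>2\<^sub>m\<^sub>+\<^sub>1\<^sub>,\<^sub>a \<ge> C\<^sub>2\<^sub>m\<^sub>+\<^sub>1 + (a - 1) C\<^sub>2\<^sub>m \<ge> 2 (1 + x)\<close>, and equality forces \<open>a = 1\<close>
  and \<open>U\<^sub>1(x) = \<dots> = U\<^sub>m(x) = 0\<close>, which happens only for \<open>m = 0\<close>, or \<open>m = 1\<close> and \<open>x = 0\<close>.
\<close>

lemma chebU_add:
  "chebU (Suc (Suc (j + k))) x = chebU (Suc j) x * chebU (Suc k) x - chebU j x * chebU k x"
proof (induction k rule: induct_nat_012)
  case (ge2 k)
  have "chebU (Suc (Suc (j + Suc (Suc k)))) x
      = 2 * x * chebU (Suc (Suc (j + Suc k))) x - chebU (Suc (Suc (j + k))) x"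
    by simp
  also have "\<dots> = chebU (Suc j) x * chebU (Suc (Suc (Suc k))) x - chebU j x * chebU (Suc (Suc k)) x"
    unfolding ge2.IH by (simp add: algebra_simps)
  finally show ?case .
qed (simp_all add: algebra_simps)

lemma chebU_double: "chebU (Suc (Suc (2 * m))) x = (chebU (Suc m) x)\<^sup>2 - (chebU m x)\<^sup>2"
  using chebU_add[of m m x] by (simp only: mult_2 power2_eq_square)

lemma chebU_double_Suc:
  "chebU (Suc (Suc (Suc (2 * m)))) x = chebU (Suc m) x * (chebU (Suc (Suc m)) x - chebU m x)"
  using chebU_add[of "Suc m" m x] by (simp del: chebU.simps add: algebra_simps flip: mult_2)

definition chebU_sum :: "nat \<Rightarrow> real \<Rightarrow> real" where
  "chebU_sum m x = (\<Sum>j\<le>m. chebU j x)"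

lemma chebU_sum_Suc: "chebU_sum (Suc m) x = chebU_sum m x + chebU (Suc m) x"
  by (simp add: chebU_sum_def)

text \<open>The recurrence gives \<open>U\<^sub>k\<^sub>+\<^sub>1 + 2 U\<^sub>k\<^sub>+\<^sub>2 + U\<^sub>k\<^sub>+\<^sub>3 = 2 (1 + x) U\<^sub>k\<^sub>+\<^sub>2\<close>.\<close>
lemma chebU_sum_pair_Suc_Suc:
  "chebU_sum (Suc (Suc (Suc k))) x + chebU_sum (Suc (Suc k)) x
     = chebU_sum (Suc k) x + chebU_sum k x + 2 * (1 + x) * chebU (Suc (Suc k)) x"
proof -
  have "chebU (Suc (Suc (Suc k))) x = 2 * x * chebU (Suc (Suc k)) x - chebU (Suc k) x"
    by (simp only: chebU.simps)
  then show ?thesis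
    by (simp del: chebU.simps add: chebU_sum_Suc algebra_simps)
qed

lemma chebU_sum_pair_even:
  "chebU_sum (Suc (2 * m)) x + chebU_sum (2 * m) x = 2 * (1 + x) * (chebU m x)\<^sup>2"
proof (induction m)
  case (Suc m)
  have "chebU_sum (Suc (2 * Suc m)) x + chebU_sum (2 * Suc m) x
      = chebU_sum (Suc (2 * m)) x + chebU_sum (2 * m) x + 2 * (1 + x) * chebU (Suc (Suc (2 * m))) x"
    using chebU_sum_pair_Suc_Suc[of "2 * m" x] by simp
  also have "\<dots> = 2 * (1 + x) * (chebU (Suc m) x)\<^sup>2"
    unfolding Suc.IH chebU_double by (simp add: algebra_simps)
  finally show ?case .
qed (simp add: chebU_sum_def)

lemma chebU_sum_pair_odd:
  "chebU_sum (Suc (Suc (2 * m))) x + chebU_sum (Suc (2 * m)) x = (chebU (Suc m) x + chebU m x)\<^sup>2"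
proof (induction m)
  case (Suc m)
  have "chebU_sum (Suc (Suc (2 * Suc m))) x + chebU_sum (Suc (2 * Suc m)) x
      = (chebU (Suc m) x + chebU m x)\<^sup>2 + 2 * (1 + x) * chebU (Suc (Suc (Suc (2 * m)))) x"
    using chebU_sum_pair_Suc_Suc[of "Suc (2 * m)" x] Suc.IH by simp
  also have "\<dots> = (chebU (Suc (Suc m)) x + chebU (Suc m) x)\<^sup>2"
    unfolding chebU_double_Suc by (simp add: algebra_simps power2_eq_square)
  finally show ?case .
qed (simp add: chebU_sum_def power2_eq_square algebra_simps)

text \<open>\<open>(m + 1)\<close> times the \<open>m\<close>-th Cesaro mean of the series \<open>\<Sum> U\<^sub>j\<close>.\<close>
definition chebU_cesaro :: "nat \<Rightarrow> real \<Rightarrow> real" where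
  "chebU_cesaro m x = (\<Sum>j\<le>m. (real m + 1 - real j) * chebU j x)"

lemma chebU_cesaro_Suc: "chebU_cesaro (Suc m) x = chebU_cesaro m x + chebU_sum (Suc m) x"
proof -
  have "(\<Sum>j\<le>m. (real (Suc m) + 1 - real j) * chebU j x)
      = (\<Sum>j\<le>m. (real m + 1 - real j) * chebU j x) + (\<Sum>j\<le>m. chebU j x)"
    by (simp add: sum.distrib[symmetric] algebra_simps)
  then show ?thesis
    by (simp add: chebU_cesaro_def chebU_sum_def)
qed

lemma chebU_cesaro_odd: "chebU_cesaro (Suc (2 * m)) x = 2 * (1 + x) * (\<Sum>i\<le>m. (chebU i x)\<^sup>2)"
proof (induction m)
  case (Suc m)
  have "chebU_cesaro (Suc (2 * Suc m)) x
      = chebU_cesaro (Suc (2 * m)) x + (chebU_sum (Suc (2 * Suc m)) x + chebU_sum (2 * Suc m) x)"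
    by (simp add: chebU_cesaro_Suc)
  then show ?case
    unfolding chebU_sum_pair_even Suc.IH by (simp add: algebra_simps)
qed (simp add: chebU_cesaro_def)

lemma chebU_cesaro_even: "chebU_cesaro (2 * m) x = 1 + (\<Sum>i<m. (chebU (Suc i) x + chebU i x)\<^sup>2)"
proof (induction m)
  case (Suc m)
  have "chebU_cesaro (2 * Suc m) x
      = chebU_cesaro (2 * m) x + (chebU_sum (Suc (Suc (2 * m))) x + chebU_sum (Suc (2 * m)) x)"
    by (simp add: chebU_cesaro_Suc)
  then show ?case
    unfolding chebU_sum_pair_odd Suc.IH by simp
qed (simp add: chebU_cesaro_def)

lemma chebU_cesaro_even_ge_1: "chebU_cesaro (2 * m) x \<ge> 1"
  unfolding chebU_cesaro_even by (simp add: sum_nonneg)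

lemma chebU_cesaro_nonneg:
  assumes "x > -1"
  shows "chebU_cesaro m x \<ge> 0"
proof (cases "even m")
  case True
  then show ?thesis
    using chebU_cesaro_even_ge_1 by (metis evenE order.trans zero_le_one)
next
  case False
  then obtain q where "m = Suc (2 * q)"
    by (metis oddE Suc_eq_plus1)
  then show ?thesis
    using assms by (simp add: chebU_cesaro_odd sum_nonneg)
qed

lemma binomR_0 [simp]: "binomR a 0 = 1"
  by (simp add: binomR_def)

lemma binomR_1: "binomR a 1 = a + 1"
  by (simp add: binomR_def)

lemma binomR_minus_one_Suc: "binomR (-1) (Suc k) = 0"
  unfolding binomR_def by (subst prod_zero) force+

lemma binomR_nonneg: "a \<ge> -1 \<Longrightarrow> binomR a k \<ge> 0"
  unfolding binomR_def by (intro divide_nonneg_pos prod_nonneg) auto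

lemma binomR_Suc: "binomR a (Suc m) = binomR a m + binomR (a - 1) (Suc m)"
proof -
  define P where "P = (\<Prod>i=1..m. a + real i)"
  have shift: "(\<Prod>i=1..Suc m. a - 1 + real i) = a * P"
    unfolding P_def by (induction m) (simp_all add: algebra_simps)
  have step: "(\<Prod>i=1..Suc m. a + real i) = P * (a + real (Suc m))"
    by (simp add: P_def)
  have "P * (a + real (Suc m)) / fact (Suc m) = P / fact m + a * P / fact (Suc m)"
    by (simp add: divide_simps) (simp add: algebra_simps)
  then show ?thesis
    unfolding binomR_def shift step P_def[symmetric] .
qed

lemma sum_binomR: "(\<Sum>k\<le>m. binomR a k) = binomR (a + 1) m"
  by (induction m) (simp_all add: binomR_Suc[of "a + 1"])

text \<open>Vandermonde's convolution with \<open>binomR 1 j = j + 1\<close>.\<close>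
lemma binomR_convolution: "binomR a m = (\<Sum>k\<le>m. binomR (a - 2) k * (real m + 1 - real k))"
proof (induction m)
  case (Suc m)
  have "(\<Sum>k\<le>Suc m. binomR (a - 2) k * (real (Suc m) + 1 - real k))
      = (\<Sum>k\<le>m. binomR (a - 2) k * (real m + 1 - real k)) + (\<Sum>k\<le>Suc m. binomR (a - 2) k)"
    by (simp add: sum.distrib[symmetric] algebra_simps)
  also have "\<dots> = binomR a (Suc m)"
    using Suc.IH sum_binomR[of "a - 2" "Suc m"] binomR_Suc[of a m] by simp
  finally show ?case by simp
qed simp

lemma sum_atMost_triangle_swap:
  fixes g :: "nat \<Rightarrow> nat \<Rightarrow> 'a::comm_monoid_add"
  shows "(\<Sum>j\<le>n. \<Sum>k\<le>n - j. g j k) = (\<Sum>k\<le>n. \<Sum>j\<le>n - k. g j k)"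
proof -
  have "(\<Sum>j\<le>n. \<Sum>k\<le>n - j. g j k) = (\<Sum>j\<le>n. \<Sum>k\<in>{k \<in> {..n}. j + k \<le> n}. g j k)"
    by (intro sum.cong) auto
  also have "\<dots> = (\<Sum>k\<le>n. \<Sum>j\<in>{j \<in> {..n}. j + k \<le> n}. g j k)"
    by (rule sum.swap_restrict) auto
  also have "\<dots> = (\<Sum>k\<le>n. \<Sum>j\<le>n - k. g j k)"
    by (intro sum.cong) auto
  finally show ?thesis .
qed

lemma Lambda_eq_sum_cesaro: "Lambda n a x = (\<Sum>k\<le>n. binomR (a - 2) k * chebU_cesaro (n - k) x)"
proof -
  have "Lambda n a x = (\<Sum>j\<le>n. \<Sum>k\<le>n - j. binomR (a - 2) k * (real (n - j) + 1 - real k) * chebU j x)"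
    by (simp add: Lambda_def atLeast0AtMost binomR_convolution[of a] sum_distrib_right)
  also have "\<dots> = (\<Sum>k\<le>n. \<Sum>j\<le>n - k. binomR (a - 2) k * (real (n - j) + 1 - real k) * chebU j x)"
    by (rule sum_atMost_triangle_swap)
  also have "\<dots> = (\<Sum>k\<le>n. binomR (a - 2) k * chebU_cesaro (n - k) x)"
    unfolding chebU_cesaro_def sum_distrib_left
    by (intro sum.cong refl) (auto simp: of_nat_diff algebra_simps)
  finally show ?thesis .
qed

lemma Lambda_1: "Lambda n 1 x = chebU_cesaro n x"
  unfolding Lambda_eq_sum_cesaro by (simp add: sum.atMost_shift binomR_minus_one_Suc)

lemma Lambda_Suc_ge:
  assumes "a \<ge> 1" and "x > -1"
  shows "Lambda (Suc n) a x \<ge> chebU_cesaro (Suc n) x + (a - 1) * chebU_cesaro n x"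
proof -
  have "Lambda (Suc n) a x = chebU_cesaro (Suc n) x + (a - 1) * chebU_cesaro n x
          + (\<Sum>k<n. binomR (a - 2) (Suc (Suc k)) * chebU_cesaro (n - Suc k) x)"
    unfolding Lambda_eq_sum_cesaro sum.atMost_Suc_shift
    by (subst sum.atMost_shift) (simp add: binomR_1[simplified])
  moreover have "(\<Sum>k<n. binomR (a - 2) (Suc (Suc k)) * chebU_cesaro (n - Suc k) x) \<ge> 0"
    using assms by (intro sum_nonneg mult_nonneg_nonneg binomR_nonneg chebU_cesaro_nonneg) auto
  ultimately show ?thesis
    by linarith
qed

lemma sum_chebU_Suc_squares_eq_0_iff:
  "(\<Sum>i<m. (chebU (Suc i) x)\<^sup>2) = 0 \<longleftrightarrow> m = 0 \<or> (m = 1 \<and> x = 0)"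
proof -
  have "(\<Sum>i<m. (chebU (Suc i) x)\<^sup>2) = 0 \<longleftrightarrow> (\<forall>i<m. chebU (Suc i) x = 0)"
    by (auto simp: sum_nonneg_eq_0_iff)
  also have "\<dots> \<longleftrightarrow> m = 0 \<or> (m = 1 \<and> x = 0)"
  proof (cases "m \<ge> 2")
    case True
    have "\<not> (\<forall>i<m. chebU (Suc i) x = 0)"
    proof
      assume "\<forall>i<m. chebU (Suc i) x = 0"
      then have "chebU (Suc 0) x = 0" "chebU (Suc 1) x = 0"
        using True by (auto simp del: chebU.simps)
      then show False
        by simp
    qed
    with True show ?thesis
      by auto
  next
    case False
    then consider "m = 0" | "m = 1"
      by linarith
    then show ?thesis
      by cases auto
  qed
  finally show ?thesis .
qed

lemma chebU_cesaro_odd_lower_bound: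
  assumes "x > -1"
  shows "chebU_cesaro (Suc (2 * m)) x \<ge> 2 * (1 + x)"
    and "chebU_cesaro (Suc (2 * m)) x = 2 * (1 + x) \<longleftrightarrow> m = 0 \<or> (m = 1 \<and> x = 0)"
proof -
  define V where "V = (\<Sum>i<m. (chebU (Suc i) x)\<^sup>2)"
  have C: "chebU_cesaro (Suc (2 * m)) x = 2 * (1 + x) + 2 * (1 + x) * V"
    unfolding chebU_cesaro_odd V_def by (simp add: sum.atMost_shift algebra_simps)
  have "V \<ge> 0"
    unfolding V_def by (simp add: sum_nonneg)
  with assms show "chebU_cesaro (Suc (2 * m)) x \<ge> 2 * (1 + x)"
    unfolding C by simp
  show "chebU_cesaro (Suc (2 * m)) x = 2 * (1 + x) \<longleftrightarrow> m = 0 \<or> (m = 1 \<and> x = 0)"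
    using assms unfolding C sum_chebU_Suc_squares_eq_0_iff[symmetric] V_def by simp
qed

theorem theorem4p2:
  fixes n :: nat and a x :: real
  assumes "odd n" and "n \<ge> 1" and "a \<ge> 1" and "-1 < x" and "x < 1"
  shows "Lambda n a x \<ge> 2 * (1 + x)
         \<and> (Lambda n a x = 2 * (1 + x) \<longleftrightarrow>
              (n = 1 \<and> a = 1) \<or> (n = 3 \<and> a = 1 \<and> x = 0))"
proof -
  obtain m where n: "n = Suc (2 * m)"
    using \<open>odd n\<close> by (metis oddE Suc_eq_plus1)
  have lower: "Lambda n a x \<ge> chebU_cesaro n x + (a - 1) * chebU_cesaro (2 * m) x"
    unfolding n using assms by (intro Lambda_Suc_ge) auto
  have cesaro: "chebU_cesaro n x \<ge> 2 * (1 + x)"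
    "chebU_cesaro n x = 2 * (1 + x) \<longleftrightarrow> m = 0 \<or> (m = 1 \<and> x = 0)"
    unfolding n using assms chebU_cesaro_odd_lower_bound by auto
  have excess: "(a - 1) * chebU_cesaro (2 * m) x \<ge> 0"
    "(a - 1) * chebU_cesaro (2 * m) x = 0 \<longleftrightarrow> a = 1"
    using assms chebU_cesaro_even_ge_1[of m x] by auto
  have "Lambda n a x = 2 * (1 + x) \<longleftrightarrow> a = 1 \<and> (m = 0 \<or> (m = 1 \<and> x = 0))"
    using lower cesaro excess Lambda_1[of n x] by (smt (verit))
  moreover have "Lambda n a x \<ge> 2 * (1 + x)"
    using lower cesaro excess by linarith
  ultimately show ?thesis
    unfolding n by auto
qed

end
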